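(* Let $\nu$ be a charge on $\mathbb{C}$ satisfying the Blaschke condition near infinity in $\mathbb{C}^{\mathrm{up}}$, i.e. $\int_{\mathbb{C}^{\mathrm{up}}\setminus D(r_0)}\operatorname{Im}\frac1{\bar z}\,d|\nu|(z)<+\infty$ for some $r_0>0$, and let $(\nu^{\mathrm{bal}})^{\mathbb{R}}$ be the distribution function on $\mathbb{R}$ of the balayage $\nu^{\mathrm{bal}}$ of $\nu$ from $\mathbb{C}^{\mathrm{up}}$. Then: (i) if $[x_1,x_2]\subset\mathbb{R}\setminus\{0\}$ is a segment with $[x_1,x_2]\cap\operatorname{supp}\nu=\varnothing$, then $(\nu^{\mathrm{bal}})^{\mathbb{R}}$ is Lipschitz on $[x_1,x_2]$; (ii) if $\nu$ is of finite type at order $p\ge 0$, i.e. $\limsup_{r\to+\infty}|\nu|(\overline D(r))/r^p<+\infty$, and $$\liminf_{\substack{z\to\infty\\ z\in\{\operatorname{Im}z\ge0\}\cap\operatorname{supp}\nu}}\frac{\operatorname{Im}z}{|z|}>0,$$ then there exist $b>0$ and $r_0>0$ such that for all $t_1<t_2$ with $x_0:=\frac{t_1+t_2}2$ satisfying $|x_0|\ge r_0$ and $|t_2-t_1|\le |x_0|/2$ one has $|(\nu^{\mathrm{bal}})^{\mathbb{R}}(t_2)-(\nu^{\mathrm{bal}})^{\mathbb{R}}(t_1)|\le b\,|t_2-t_1|\,|x_0|^{p-1}$.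
   Context: A charge on $\mathbb{C}$ is a countably additive function on Borel sets with values in $[-\infty,+\infty]$, finite on compact sets; $|\nu|$ is its total variation. $D(r)$, $\overline D(r)$: open/closed discs of radius $r$ centred at $0$. $\mathbb{C}^{\mathrm{up}}=\{\operatorname{Im}z>0\}$, $\mathbb{C}_{\overline{\mathrm{lw}}}=\{\operatorname{Im}z\le0\}$. Harmonic measure: $\omega(z,B)=\frac1\pi\int_{B\cap\mathbb{R}}\frac{\operatorname{Im}z}{(t-\operatorname{Re}z)^2+(\operatorname{Im}z)^2}dt$ for $z\in\mathbb{C}^{\mathrm{up}}$. Balayage from $\mathbb{C}^{\mathrm{up}}$: $\nu^{\mathrm{bal}}(B)=\int_{\mathbb{C}^{\mathrm{up}}}\omega(z,B)\,d\nu(z)+\nu(B\cap\mathbb{C}_{\overline{\mathrm{lw}}})$. For a charge $\mu$, $\mu^{\mathbb{R}}(x)=\mu([0,x])$ for $x\ge0$ and $-\mu([x,0))$ for $x<0$. *)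

theory Defs
  imports "HOL-Analysis.Analysis"
begin

text \<open>A charge \<nu> on the complex plane is represented by its Jordan decomposition
  \<nu> = \<nu>p - \<nu>m: two Borel measures, finite on compact sets, mutually singular.\<close>

definition is_charge :: "complex measure \<Rightarrow> complex measure \<Rightarrow> bool" where
  "is_charge \<nu>p \<nu>m \<longleftrightarrow>
     sets \<nu>p = sets borel \<and> sets \<nu>m = sets borel \<and>
     (\<forall>K. compact K \<longrightarrow> emeasure \<nu>p K < \<infinity> \<and> emeasure \<nu>m K < \<infinity>) \<and>
     (\<exists>P \<in> sets borel. emeasure \<nu>m P = 0 \<and> emeasure \<nu>p (- P) = 0)"

definition totvar :: "complex measure \<Rightarrow> complex measure \<Rightarrow> complex set \<Rightarrow> ennreal" where
  "totvar \<nu>p \<nu>m A = emeasure \<nu>p A + emeasure \<nu>m A"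

definition charge_supp :: "complex measure \<Rightarrow> complex measure \<Rightarrow> complex set" where
  "charge_supp \<nu>p \<nu>m = {z. \<forall>e>0. totvar \<nu>p \<nu>m (ball z e) > 0}"

definition upper_half :: "complex set" where
  "upper_half = {z. Im z > 0}"

definition harm_measure :: "complex \<Rightarrow> real set \<Rightarrow> ennreal" where
  "harm_measure z B =
     (\<integral>\<^sup>+ t. indicator B t * ennreal (Im z / ((t - Re z)\<^sup>2 + (Im z)\<^sup>2)) \<partial>lborel) / ennreal pi"

text \<open>Balayage of a (positive) measure from the upper half-plane, evaluated on a
  set B of the real line (then B \<inter> closed lower half-plane = B).\<close>
definition bal_measure :: "complex measure \<Rightarrow> real set \<Rightarrow> ennreal" where
  "bal_measure \<mu> B =
     (\<integral>\<^sup>+ z. indicator upper_half z * harm_measure z B \<partial>\<mu>) + emeasure \<mu> (complex_of_real ` B)"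

definition charge_bal :: "complex measure \<Rightarrow> complex measure \<Rightarrow> real set \<Rightarrow> real" where
  "charge_bal \<nu>p \<nu>m B = enn2real (bal_measure \<nu>p B) - enn2real (bal_measure \<nu>m B)"

definition distr_fun :: "(real set \<Rightarrow> real) \<Rightarrow> real \<Rightarrow> real" where
  "distr_fun \<mu> x = (if 0 \<le> x then \<mu> {0..x} else - \<mu> {x..<0})"

end

theory Submission
  imports Defs
begin

(* Let F be the distribution function of the balayage and P(z, t) = Im z / |z - t|^2 the
   Poisson kernel of the upper half-plane. On a segment [t1, t2] missing supp nu the balayage
   only comes from the upper half-plane, so any |nu|-integrable g with P(z, t) <= g z for all
   t in [t1, t2] gives |F t2 - F t1| <= (t2 - t1) / pi * (integral of g d|nu|). Far from the
   segment P(z, t) <= 4 Im (1 / conj z), which is integrable by the Blaschke condition.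
   For (i), P is bounded near the segment because supp nu keeps a positive distance from it.
   For (ii), with s = |x0|, points of D(s/2) are at distance at least s/4 from the segment, and
   the rest of the support near it lies in a cone Im z >= c |z|, where P <= 1 / Im z <= 2 / (c s).
   The growth |nu|(D(r)) = O(r^p) then makes the integral of this majorant O(s^(p-1)), its far
   part through a dyadic decomposition when p < 1. *)

definition poisson_kernel :: "complex \<Rightarrow> real \<Rightarrow> real" where
  "poisson_kernel z t = Im z / ((t - Re z)\<^sup>2 + (Im z)\<^sup>2)"

definition blaschke_tail :: "complex measure \<Rightarrow> real \<Rightarrow> ennreal" where
  "blaschke_tail M r = (\<integral>\<^sup>+ z. indicator (upper_half - ball 0 r) z * ennreal (Im (1 / cnj z)) \<partial>M)"

section \<open>Support of a charge\<close>

lemma ball_cball_borel[measurable]: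
  fixes x :: "'a::metric_space"
  shows "ball x r \<in> sets borel" "cball x r \<in> sets borel"
  by (simp_all add: borel_open borel_closed)

lemma is_chargeD:
  assumes "is_charge \<nu>p \<nu>m"
  shows "sets \<nu>p = sets borel" "sets \<nu>m = sets borel"
    and "compact K \<Longrightarrow> emeasure \<nu>p K < \<infinity>" "compact K \<Longrightarrow> emeasure \<nu>m K < \<infinity>"
  using assms by (auto simp: is_charge_def)

lemma totvar_mono:
  assumes "is_charge \<nu>p \<nu>m" "A \<subseteq> B" "B \<in> sets borel"
  shows "totvar \<nu>p \<nu>m A \<le> totvar \<nu>p \<nu>m B"
  unfolding totvar_def using assms by (intro add_mono emeasure_mono) (auto dest: is_chargeD)

lemma totvar_leD:
  "totvar \<nu>p \<nu>m A \<le> x \<Longrightarrow> emeasure \<nu>p A \<le> x \<and> emeasure \<nu>m A \<le> x"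
  unfolding totvar_def by (metis add_increasing add_increasing2 order_trans zero_le order_refl)

lemma compl_charge_supp_eq_Union:
  assumes "is_charge \<nu>p \<nu>m"
  shows "- charge_supp \<nu>p \<nu>m = \<Union>{ball z e | z e. 0 < e \<and> totvar \<nu>p \<nu>m (ball z e) = 0}"
proof (intro equalityI subsetI)
  fix x assume "x \<in> - charge_supp \<nu>p \<nu>m"
  then obtain e where "0 < e" "totvar \<nu>p \<nu>m (ball x e) = 0" by (auto simp: charge_supp_def)
  then show "x \<in> \<Union>{ball z e | z e. 0 < e \<and> totvar \<nu>p \<nu>m (ball z e) = 0}"
    by (auto intro!: exI[of _ "ball x e"])
next
  fix x assume "x \<in> \<Union>{ball z e | z e. 0 < e \<and> totvar \<nu>p \<nu>m (ball z e) = 0}"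
  then obtain z e where e: "totvar \<nu>p \<nu>m (ball z e) = 0" "x \<in> ball z e" by auto
  have "ball x (e - dist z x) \<subseteq> ball z e"
    by (simp add: ball_subset_ball_iff dist_commute)
  then have "totvar \<nu>p \<nu>m (ball x (e - dist z x)) = 0"
    using totvar_mono[OF assms] e(1) by (metis le_zero_eq borel_open open_ball)
  with e(2) show "x \<in> - charge_supp \<nu>p \<nu>m"
    by (auto simp: charge_supp_def intro!: exI[of _ "e - dist z x"])
qed

lemma closed_charge_supp:
  assumes "is_charge \<nu>p \<nu>m"
  shows "closed (charge_supp \<nu>p \<nu>m)"
proof -
  have "open (- charge_supp \<nu>p \<nu>m)"
    unfolding compl_charge_supp_eq_Union[OF assms] by auto
  then show ?thesis by (simp add: closed_open)
qed

lemma compl_charge_supp_null: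
  assumes "is_charge \<nu>p \<nu>m"
  shows "- charge_supp \<nu>p \<nu>m \<in> null_sets \<nu>p" "- charge_supp \<nu>p \<nu>m \<in> null_sets \<nu>m"
proof -
  define \<F> where "\<F> = {ball z e | z e. 0 < e \<and> totvar \<nu>p \<nu>m (ball z e) = 0}"
  obtain \<F>' where \<F>': "\<F>' \<subseteq> \<F>" "countable \<F>'" "\<Union>\<F>' = - charge_supp \<nu>p \<nu>m"
    using Lindelof[of \<F>] compl_charge_supp_eq_Union[OF assms] by (auto simp: \<F>_def)
  have "S \<in> null_sets \<nu>p \<and> S \<in> null_sets \<nu>m" if "S \<in> \<F>'" for S
    using that \<F>'(1) is_chargeD[OF assms] by (auto simp: \<F>_def totvar_def null_sets_def)
  then show "- charge_supp \<nu>p \<nu>m \<in> null_sets \<nu>p" "- charge_supp \<nu>p \<nu>m \<in> null_sets \<nu>m"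
    using null_sets_UN'[OF \<F>'(2), of "\<lambda>S. S"] \<F>'(3) by auto
qed

section \<open>Balayage and the distribution function\<close>

lemma harm_measure_poisson_kernel:
  "harm_measure z B = (\<integral>\<^sup>+ t. indicator B t * ennreal (poisson_kernel z t) \<partial>lborel) / ennreal pi"
  by (simp add: harm_measure_def poisson_kernel_def)

lemma borel_measurable_poisson_kernel[measurable]: "poisson_kernel z \<in> borel_measurable borel"
  unfolding poisson_kernel_def by measurable

lemma borel_measurable_harm_measure[measurable]:
  assumes [measurable]: "B \<in> sets borel"
  shows "(\<lambda>z. harm_measure z B) \<in> borel_measurable borel"
proof -
  have "(\<lambda>(z, t). indicator B t * ennreal (poisson_kernel z t)) \<in> borel_measurable (borel \<Otimes>\<^sub>M lborel)"
    unfolding poisson_kernel_def by measurable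
  from lborel.borel_measurable_nn_integral[OF this] show ?thesis
    unfolding harm_measure_poisson_kernel by measurable
qed

lemma image_complex_of_real_eq: "complex_of_real ` B = {z. Im z = 0} \<inter> Re -` B"
  by (auto simp: image_iff complex_eq_iff intro!: bexI[of _ "Re _"])

lemma sets_image_complex_of_real[measurable]:
  assumes [measurable]: "B \<in> sets borel"
  shows "complex_of_real ` B \<in> sets borel"
  unfolding image_complex_of_real_eq by measurable

lemma additive_harm_measure: "additive (sets borel) (harm_measure z)"
proof (unfold additive_def, safe)
  fix A B :: "real set" assume [measurable]: "A \<in> sets borel" "B \<in> sets borel" and "A \<inter> B = {}"
  then have "(\<integral>\<^sup>+ t. indicator (A \<union> B) t * ennreal (poisson_kernel z t) \<partial>lborel)
      = (\<integral>\<^sup>+ t. indicator A t * ennreal (poisson_kernel z t) + indicator B t * ennreal (poisson_kernel z t) \<partial>lborel)"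
    by (intro nn_integral_cong) (auto simp: indicator_def)
  also have "\<dots> = (\<integral>\<^sup>+ t. indicator A t * ennreal (poisson_kernel z t) \<partial>lborel)
      + (\<integral>\<^sup>+ t. indicator B t * ennreal (poisson_kernel z t) \<partial>lborel)"
    by (rule nn_integral_add) auto
  finally show "harm_measure z (A \<union> B) = harm_measure z A + harm_measure z B"
    by (simp add: harm_measure_poisson_kernel add_divide_distrib_ennreal)
qed

lemma additive_bal_measure:
  assumes sM: "sets M = sets borel"
  shows "additive (sets borel) (bal_measure M)"
proof (unfold additive_def, safe)
  fix A B :: "real set" assume [measurable]: "A \<in> sets borel" "B \<in> sets borel" and AB: "A \<inter> B = {}"
  have [measurable]: "(\<lambda>z. indicator upper_half z * harm_measure z C) \<in> borel_measurable M"
    if [measurable]: "C \<in> sets borel" for C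
    unfolding measurable_cong_sets[OF sM refl] upper_half_def by measurable
  have "(\<integral>\<^sup>+ z. indicator upper_half z * harm_measure z (A \<union> B) \<partial>M)
      = (\<integral>\<^sup>+ z. indicator upper_half z * harm_measure z A \<partial>M) + (\<integral>\<^sup>+ z. indicator upper_half z * harm_measure z B \<partial>M)"
    using additive_harm_measure AB
    by (simp add: additive_def distrib_left nn_integral_add)
  moreover have "emeasure M (complex_of_real ` (A \<union> B))
      = emeasure M (complex_of_real ` A) + emeasure M (complex_of_real ` B)"
    using AB sM by (subst image_Un, intro plus_emeasure[symmetric]) auto
  ultimately show "bal_measure M (A \<union> B) = bal_measure M A + bal_measure M B"
    by (simp add: bal_measure_def algebra_simps)
qed

lemma enn2real_add_diff_bounds:
  assumes "c < \<infinity>"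
  shows "0 \<le> enn2real (a + c) - enn2real a" "enn2real (a + c) - enn2real a \<le> enn2real c"
  using assms by (cases "a = \<infinity>"; simp add: enn2real_plus less_top)+

lemma distr_fun_diff: "distr_fun (\<lambda>A. f A - g A) x = distr_fun f x - distr_fun g x"
  by (simp add: distr_fun_def)

text \<open>No sign condition on the segment is needed: the increment is the mass of \<open>[t1, t2]\<close>
  with at most one endpoint removed.\<close>

lemma distr_fun_increment_bounds:
  fixes \<mu> :: "real set \<Rightarrow> ennreal"
  assumes add: "additive (sets borel) \<mu>" and t: "t1 \<le> t2" and fin: "\<mu> {t1..t2} < \<infinity>"
  defines "F \<equiv> distr_fun (\<lambda>A. enn2real (\<mu> A))"
  shows "0 \<le> F t2 - F t1 \<and> F t2 - F t1 \<le> enn2real (\<mu> {t1..t2})"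
proof -
  have split: "\<mu> (A \<union> B) = \<mu> A + \<mu> B" if "A \<in> sets borel" "B \<in> sets borel" "A \<inter> B = {}" for A B
    using add that by (simp add: additive_def)
  have part: "enn2real (\<mu> A) \<le> enn2real (\<mu> {t1..t2}) \<and> \<mu> A < \<infinity>"
    if "A \<in> sets borel" "A \<subseteq> {t1..t2}" for A
  proof -
    have "\<mu> {t1..t2} = \<mu> A + \<mu> ({t1..t2} - A)"
      using split[of A "{t1..t2} - A"] that by (simp add: Un_absorb1)
    then show ?thesis using fin by (auto intro: enn2real_mono)
  qed
  consider "0 \<le> t1" | "t2 < 0" | "t1 < 0" "0 \<le> t2" by linarith
  then show ?thesis
  proof cases
    case 1
    have eq: "{0..t2} = {0..t1} \<union> {t1<..t2}" using 1 t by auto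
    have "\<mu> {0..t2} = \<mu> {0..t1} + \<mu> {t1<..t2}" unfolding eq by (rule split) auto
    moreover have "enn2real (\<mu> {t1<..t2}) \<le> enn2real (\<mu> {t1..t2}) \<and> \<mu> {t1<..t2} < \<infinity>"
      by (rule part) auto
    ultimately show ?thesis
      using 1 t enn2real_add_diff_bounds[of "\<mu> {t1<..t2}" "\<mu> {0..t1}"]
      by (simp add: F_def distr_fun_def)
  next
    case 2
    have eq: "{t1..<0} = {t2..<0} \<union> {t1..<t2}" using 2 t by auto
    have "\<mu> {t1..<0} = \<mu> {t2..<0} + \<mu> {t1..<t2}" unfolding eq by (rule split) auto
    moreover have "enn2real (\<mu> {t1..<t2}) \<le> enn2real (\<mu> {t1..t2}) \<and> \<mu> {t1..<t2} < \<infinity>"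
      by (rule part) auto
    ultimately show ?thesis
      using 2 t enn2real_add_diff_bounds[of "\<mu> {t1..<t2}" "\<mu> {t2..<0}"]
      by (simp add: F_def distr_fun_def)
  next
    case 3
    have eq: "{t1..t2} = {t1..<0} \<union> {0..t2}" using 3 by auto
    have "\<mu> {t1..t2} = \<mu> {t1..<0} + \<mu> {0..t2}" unfolding eq by (rule split) auto
    moreover have "\<mu> {t1..<0} < \<infinity>" "\<mu> {0..t2} < \<infinity>"
      using part[of "{t1..<0}"] part[of "{0..t2}"] 3 by (auto simp: subset_eq)
    ultimately show ?thesis
      using 3 by (simp add: F_def distr_fun_def enn2real_plus)
  qed
qed

section \<open>Majorants of the Poisson kernel\<close>

lemma poisson_kernel_norm: "poisson_kernel z t = Im z / (cmod (z - complex_of_real t))\<^sup>2"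
  by (simp add: poisson_kernel_def cmod_power2 power2_commute)

lemma Im_inverse_cnj: "Im (1 / cnj z) = Im z / (cmod z)\<^sup>2"
  by (simp add: Im_divide cmod_power2)

lemma Im_inverse_cnj_le: "Im (1 / cnj z) \<le> 1 / cmod z"
proof (cases "z = 0")
  case False
  then have "Im z / (cmod z)\<^sup>2 \<le> cmod z / (cmod z)\<^sup>2"
    using abs_Im_le_cmod[of z] by (intro divide_right_mono) auto
  with False show ?thesis by (simp add: Im_inverse_cnj power2_eq_square)
qed simp

lemma borel_measurable_Im_inverse_cnj[measurable]: "(\<lambda>z. Im (1 / cnj z)) \<in> borel_measurable borel"
  unfolding Im_inverse_cnj by measurable

lemma poisson_kernel_le_of_dist:
  assumes "0 \<le> Im z" "Im z \<le> h" "0 < \<delta>" "\<delta> \<le> cmod (z - complex_of_real t)"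
  shows "poisson_kernel z t \<le> h / \<delta>\<^sup>2"
  unfolding poisson_kernel_norm using assms by (intro frac_le power_mono) auto

lemma poisson_kernel_le_inverse_Im:
  assumes "0 < Im z"
  shows "poisson_kernel z t \<le> 1 / Im z"
proof -
  have "poisson_kernel z t \<le> Im z / (Im z)\<^sup>2"
    unfolding poisson_kernel_def using assms
    by (intro divide_left_mono) (auto intro!: mult_pos_pos add_nonneg_pos)
  then show ?thesis using assms by (simp add: power2_eq_square)
qed

lemma poisson_kernel_le_far:
  assumes "0 < Im z" "2 * \<bar>t\<bar> \<le> cmod z"
  shows "poisson_kernel z t \<le> 4 * Im (1 / cnj z)"
proof -
  have "cmod z - \<bar>t\<bar> \<le> cmod (z - complex_of_real t)"
    using norm_triangle_ineq2[of z "complex_of_real t"] by simp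
  then have "cmod z / 2 \<le> cmod (z - complex_of_real t)" using assms(2) by linarith
  from power_mono[OF this, of 2] have "(cmod z)\<^sup>2 / 4 \<le> (cmod (z - complex_of_real t))\<^sup>2"
    by (simp add: power_divide)
  moreover have "0 < cmod z" "0 < cmod (z - complex_of_real t)"
    using assms(1) by (auto simp: complex_eq_iff)
  ultimately have "poisson_kernel z t \<le> Im z / ((cmod z)\<^sup>2 / 4)"
    unfolding poisson_kernel_norm using assms(1) by (intro divide_left_mono) auto
  then show ?thesis by (simp add: Im_inverse_cnj mult.commute)
qed

lemma harm_measure_interval_le:
  assumes "t1 \<le> t2" and "\<forall>t\<in>{t1..t2}. poisson_kernel z t \<le> g"
  shows "harm_measure z {t1..t2} \<le> ennreal ((t2 - t1) / pi) * ennreal g"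
proof -
  have "(\<integral>\<^sup>+ t. indicator {t1..t2} t * ennreal (poisson_kernel z t) \<partial>lborel)
      \<le> (\<integral>\<^sup>+ t. ennreal g * indicator {t1..t2} t \<partial>lborel)"
    using assms by (intro nn_integral_mono) (auto simp: indicator_def intro: ennreal_leI)
  also have "\<dots> = ennreal g * ennreal (t2 - t1)"
    using assms by (subst nn_integral_cmult_indicator) auto
  finally have "harm_measure z {t1..t2} \<le> ennreal g * ennreal (t2 - t1) / ennreal pi"
    unfolding harm_measure_poisson_kernel by (rule divide_right_mono_ennreal)
  also have "\<dots> = ennreal ((t2 - t1) / pi) * ennreal g"
    using assms by (simp add: ennreal_times_divide[symmetric] divide_ennreal mult.commute)
  finally show ?thesis .
qed

lemma bal_measure_interval_le:
  assumes sM: "sets M = sets borel" and t: "t1 \<le> t2"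
    and null: "emeasure M (complex_of_real ` {t1..t2}) = 0"
    and ae: "AE z in M. 0 < Im z \<longrightarrow> (\<forall>t\<in>{t1..t2}. poisson_kernel z t \<le> g z)"
    and [measurable]: "g \<in> borel_measurable borel"
  shows "bal_measure M {t1..t2}
    \<le> ennreal ((t2 - t1) / pi) * (\<integral>\<^sup>+ z. indicator upper_half z * ennreal (g z) \<partial>M)"
proof -
  have "(\<integral>\<^sup>+ z. indicator upper_half z * harm_measure z {t1..t2} \<partial>M)
      \<le> (\<integral>\<^sup>+ z. ennreal ((t2 - t1) / pi) * (indicator upper_half z * ennreal (g z)) \<partial>M)"
  proof (rule nn_integral_mono_AE)
    show "AE z in M. indicator upper_half z * harm_measure z {t1..t2}
        \<le> ennreal ((t2 - t1) / pi) * (indicator upper_half z * ennreal (g z))"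
      using ae
    proof eventually_elim
      case (elim z)
      then show ?case
        using harm_measure_interval_le[OF t, of z "g z"] by (simp add: upper_half_def indicator_def)
    qed
  qed
  also have "\<dots> = ennreal ((t2 - t1) / pi) * (\<integral>\<^sup>+ z. indicator upper_half z * ennreal (g z) \<partial>M)"
    by (rule nn_integral_cmult) (unfold measurable_cong_sets[OF sM refl] upper_half_def, measurable)
  finally show ?thesis unfolding bal_measure_def null by simp
qed

text \<open>The balayage of \<open>\<nu>\<close> to a segment free of \<open>supp \<nu>\<close> comes only from the upper
  half-plane, so it is controlled by any \<open>|\<nu>|\<close>-integrable majorant of the Poisson kernel.\<close>

lemma bal_measure_charge_interval_le:
  assumes charge: "is_charge \<nu>p \<nu>m" and t: "t1 \<le> t2"
    and disj: "complex_of_real ` {t1..t2} \<inter> charge_supp \<nu>p \<nu>m = {}"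
    and major: "\<And>z t. z \<in> charge_supp \<nu>p \<nu>m \<Longrightarrow> 0 < Im z \<Longrightarrow> t \<in> {t1..t2} \<Longrightarrow> poisson_kernel z t \<le> g z"
    and [measurable]: "g \<in> borel_measurable borel"
    and C: "(\<integral>\<^sup>+ z. indicator upper_half z * ennreal (g z) \<partial>\<nu>p)
            + (\<integral>\<^sup>+ z. indicator upper_half z * ennreal (g z) \<partial>\<nu>m) \<le> ennreal C"
    and "0 \<le> C"
  shows "bal_measure \<nu>p {t1..t2} + bal_measure \<nu>m {t1..t2} \<le> ennreal ((t2 - t1) / pi * C)"
proof -
  let ?I = "\<lambda>\<mu>. \<integral>\<^sup>+ z. indicator upper_half z * ennreal (g z) \<partial>\<mu>"
  have bal_le: "bal_measure \<mu> {t1..t2} \<le> ennreal ((t2 - t1) / pi) * ?I \<mu>"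
    if "sets \<mu> = sets borel" "- charge_supp \<nu>p \<nu>m \<in> null_sets \<mu>" for \<mu>
  proof (rule bal_measure_interval_le[OF that(1) t])
    show "emeasure \<mu> (complex_of_real ` {t1..t2}) = 0"
      using disj by (intro emeasure_eq_0[OF null_setsD2[OF that(2)] null_setsD1[OF that(2)]]) auto
    show "AE z in \<mu>. 0 < Im z \<longrightarrow> (\<forall>t\<in>{t1..t2}. poisson_kernel z t \<le> g z)"
      using major by (intro AE_I'[OF that(2)]) auto
  qed measurable
  have "bal_measure \<nu>p {t1..t2} + bal_measure \<nu>m {t1..t2}
      \<le> ennreal ((t2 - t1) / pi) * (?I \<nu>p + ?I \<nu>m)"
    using bal_le is_chargeD[OF charge] compl_charge_supp_null[OF charge]
    by (simp add: distrib_left add_mono)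
  also have "\<dots> \<le> ennreal ((t2 - t1) / pi) * ennreal C"
    by (rule mult_left_mono[OF C]) simp
  also have "\<dots> = ennreal ((t2 - t1) / pi * C)"
    using t \<open>0 \<le> C\<close> by (intro ennreal_mult[symmetric]) auto
  finally show ?thesis .
qed

lemma distr_fun_charge_bal_increment_le:
  assumes charge: "is_charge \<nu>p \<nu>m" and t: "t1 \<le> t2"
    and disj: "complex_of_real ` {t1..t2} \<inter> charge_supp \<nu>p \<nu>m = {}"
    and major: "\<And>z t. z \<in> charge_supp \<nu>p \<nu>m \<Longrightarrow> 0 < Im z \<Longrightarrow> t \<in> {t1..t2} \<Longrightarrow> poisson_kernel z t \<le> g z"
    and g: "g \<in> borel_measurable borel"
    and C: "(\<integral>\<^sup>+ z. indicator upper_half z * ennreal (g z) \<partial>\<nu>p)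
            + (\<integral>\<^sup>+ z. indicator upper_half z * ennreal (g z) \<partial>\<nu>m) \<le> ennreal C"
    and "0 \<le> C"
  defines "F \<equiv> distr_fun (charge_bal \<nu>p \<nu>m)"
  shows "\<bar>F t2 - F t1\<bar> \<le> (t2 - t1) / pi * C"
proof -
  let ?F = "\<lambda>\<mu>. distr_fun (\<lambda>A. enn2real (bal_measure \<mu> A))"
  note sum_le = bal_measure_charge_interval_le[OF assms(1-7)]
  have fin: "bal_measure \<nu>p {t1..t2} < \<infinity>" "bal_measure \<nu>m {t1..t2} < \<infinity>"
    using le_less_trans[OF sum_le ennreal_less_top] by auto
  have real_le: "enn2real (bal_measure \<nu>p {t1..t2}) + enn2real (bal_measure \<nu>m {t1..t2}) \<le> (t2 - t1) / pi * C"
    using sum_le fin t \<open>0 \<le> C\<close> by (simp add: enn2real_plus[symmetric] enn2real_leI)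
  have incr: "0 \<le> ?F \<mu> t2 - ?F \<mu> t1 \<and> ?F \<mu> t2 - ?F \<mu> t1 \<le> enn2real (bal_measure \<mu> {t1..t2})"
    if "sets \<mu> = sets borel" "bal_measure \<mu> {t1..t2} < \<infinity>" for \<mu>
    using distr_fun_increment_bounds[OF additive_bal_measure[OF that(1)] t that(2)] .
  have "F t = ?F \<nu>p t - ?F \<nu>m t" for t
    unfolding F_def charge_bal_def by (rule distr_fun_diff)
  then show ?thesis
    using real_le incr[OF is_chargeD(1)[OF charge] fin(1)] incr[OF is_chargeD(2)[OF charge] fin(2)]
    by (simp add: abs_le_iff)
qed

text \<open>Beyond radius \<open>R\<close> the Poisson kernel of the points \<open>t\<close> with \<open>2 \<bar>t\<bar> \<le> R\<close> is at most
  \<open>4 Im (1 / z\<^sup>*)\<close>, whose integral is controlled by the Blaschke condition.\<close>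

definition poisson_majorant :: "real \<Rightarrow> (complex \<Rightarrow> real) \<Rightarrow> complex \<Rightarrow> real" where
  "poisson_majorant R h z = (if cmod z \<le> R then h z else 4 * Im (1 / cnj z))"

lemma borel_measurable_poisson_majorant[measurable]:
  assumes [measurable]: "h \<in> borel_measurable borel"
  shows "poisson_majorant R h \<in> borel_measurable borel"
  unfolding poisson_majorant_def Im_inverse_cnj by measurable

lemma poisson_kernel_le_majorant:
  assumes "0 < Im z" "2 * \<bar>t\<bar> \<le> R" "cmod z \<le> R \<Longrightarrow> poisson_kernel z t \<le> h z"
  shows "poisson_kernel z t \<le> poisson_majorant R h z"
  using assms poisson_kernel_le_far[OF assms(1), of t] by (auto simp: poisson_majorant_def)

lemma nn_integral_poisson_majorant_le:
  assumes sM: "sets M = sets borel" and [measurable]: "h \<in> borel_measurable borel" and "r \<le> R"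
  shows "(\<integral>\<^sup>+ z. indicator upper_half z * ennreal (poisson_majorant R h z) \<partial>M)
    \<le> (\<integral>\<^sup>+ z. indicator (cball 0 R) z * ennreal (h z) \<partial>M) + 4 * blaschke_tail M r"
proof -
  have [measurable]: "(\<lambda>z. indicator (cball 0 R) z * ennreal (h z)) \<in> borel_measurable M"
    "(\<lambda>z. indicator (upper_half - ball 0 r) z * ennreal (Im (1 / cnj z))) \<in> borel_measurable M"
    unfolding measurable_cong_sets[OF sM refl] upper_half_def by measurable
  have "(\<integral>\<^sup>+ z. indicator upper_half z * ennreal (poisson_majorant R h z) \<partial>M)
      \<le> (\<integral>\<^sup>+ z. indicator (cball 0 R) z * ennreal (h z)
            + 4 * (indicator (upper_half - ball 0 r) z * ennreal (Im (1 / cnj z))) \<partial>M)"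
    using \<open>r \<le> R\<close>
    by (intro nn_integral_mono) (auto simp: poisson_majorant_def indicator_def ennreal_mult')
  also have "\<dots> = (\<integral>\<^sup>+ z. indicator (cball 0 R) z * ennreal (h z) \<partial>M) + 4 * blaschke_tail M r"
    unfolding blaschke_tail_def by (simp add: nn_integral_add nn_integral_cmult)
  finally show ?thesis .
qed

section \<open>Lipschitz continuity off the support\<close>

lemma poisson_majorant_off_charge_supp:
  assumes charge: "is_charge \<nu>p \<nu>m"
    and blaschke: "blaschke_tail \<nu>p r0 + blaschke_tail \<nu>m r0 < \<infinity>"
    and disj: "complex_of_real ` {x1..x2} \<inter> charge_supp \<nu>p \<nu>m = {}"
  obtains g C where "g \<in> borel_measurable borel" "0 \<le> C"
    "\<And>z t. z \<in> charge_supp \<nu>p \<nu>m \<Longrightarrow> 0 < Im z \<Longrightarrow> t \<in> {x1..x2} \<Longrightarrow> poisson_kernel z t \<le> g z"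
    "(\<integral>\<^sup>+ z. indicator upper_half z * ennreal (g z) \<partial>\<nu>p)
      + (\<integral>\<^sup>+ z. indicator upper_half z * ennreal (g z) \<partial>\<nu>m) \<le> ennreal C"
proof -
  have "compact (complex_of_real ` {x1..x2})"
    by (intro compact_continuous_image continuous_intros) auto
  then obtain \<delta> where \<delta>: "0 < \<delta>"
    and sep: "\<And>t z. t \<in> {x1..x2} \<Longrightarrow> z \<in> charge_supp \<nu>p \<nu>m \<Longrightarrow> \<delta> \<le> cmod (z - complex_of_real t)"
    using separate_compact_closed[OF _ closed_charge_supp[OF charge] disj]
    by (metis dist_commute dist_norm image_eqI)
  define R where "R = max r0 (2 * max \<bar>x1\<bar> \<bar>x2\<bar>)"
  have R: "r0 \<le> R" "\<And>t. t \<in> {x1..x2} \<Longrightarrow> 2 * \<bar>t\<bar> \<le> R" by (auto simp: R_def)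
  define g where "g = poisson_majorant R (\<lambda>_. R / \<delta>\<^sup>2)"
  have major: "poisson_kernel z t \<le> g z"
    if "z \<in> charge_supp \<nu>p \<nu>m" "0 < Im z" "t \<in> {x1..x2}" for z t
    unfolding g_def
  proof (rule poisson_kernel_le_majorant)
    show "2 * \<bar>t\<bar> \<le> R" using R(2) that(3) .
    show "poisson_kernel z t \<le> R / \<delta>\<^sup>2" if "cmod z \<le> R"
      using poisson_kernel_le_of_dist[OF _ _ \<delta> sep] abs_Im_le_cmod[of z] \<open>cmod z \<le> R\<close>
        \<open>0 < Im z\<close> \<open>z \<in> charge_supp \<nu>p \<nu>m\<close> \<open>t \<in> {x1..x2}\<close> by simp
  qed fact
  define B where "B \<mu> = ennreal (R / \<delta>\<^sup>2) * emeasure \<mu> (cball 0 R) + 4 * blaschke_tail \<mu> r0" for \<mu>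
  have I_le: "(\<integral>\<^sup>+ z. indicator upper_half z * ennreal (g z) \<partial>\<mu>) \<le> B \<mu>"
    if "sets \<mu> = sets borel" for \<mu>
    using nn_integral_poisson_majorant_le[OF that _ R(1), of "\<lambda>_. R / \<delta>\<^sup>2"]
      nn_integral_cmult_indicator[of "cball 0 R" \<mu> "ennreal (R / \<delta>\<^sup>2)"]
    by (simp add: g_def B_def that mult.commute)
  have "B \<nu>p + B \<nu>m < \<infinity>"
    using blaschke is_chargeD(3,4)[OF charge, of "cball 0 R"]
    by (simp add: B_def ennreal_mult_less_top less_top)
  then have "(\<integral>\<^sup>+ z. indicator upper_half z * ennreal (g z) \<partial>\<nu>p)
      + (\<integral>\<^sup>+ z. indicator upper_half z * ennreal (g z) \<partial>\<nu>m) \<le> ennreal (enn2real (B \<nu>p + B \<nu>m))"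
    using add_mono[OF I_le I_le] is_chargeD[OF charge] by simp
  moreover have "g \<in> borel_measurable borel" unfolding g_def by measurable
  ultimately show ?thesis using that[OF _ enn2real_nonneg major] by blast
qed

lemma lipschitz_on_distr_fun_charge_bal:
  assumes charge: "is_charge \<nu>p \<nu>m"
    and blaschke: "blaschke_tail \<nu>p r0 + blaschke_tail \<nu>m r0 < \<infinity>"
    and disj: "complex_of_real ` {x1..x2} \<inter> charge_supp \<nu>p \<nu>m = {}"
  shows "\<exists>L. L-lipschitz_on {x1..x2} (distr_fun (charge_bal \<nu>p \<nu>m))"
proof -
  obtain g C where g: "g \<in> borel_measurable borel" and "0 \<le> C"
    and major: "\<And>z t. z \<in> charge_supp \<nu>p \<nu>m \<Longrightarrow> 0 < Im z \<Longrightarrow> t \<in> {x1..x2} \<Longrightarrow> poisson_kernel z t \<le> g z"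
    and C: "(\<integral>\<^sup>+ z. indicator upper_half z * ennreal (g z) \<partial>\<nu>p)
      + (\<integral>\<^sup>+ z. indicator upper_half z * ennreal (g z) \<partial>\<nu>m) \<le> ennreal C"
    using poisson_majorant_off_charge_supp[OF charge blaschke disj] by blast
  have "(C / pi)-lipschitz_on {x1..x2} (distr_fun (charge_bal \<nu>p \<nu>m))"
  proof (rule lipschitz_on_leI)
    fix a b assume ab: "a \<in> {x1..x2}" "b \<in> {x1..x2}" "a \<le> b"
    then have sub: "{a..b} \<subseteq> {x1..x2}" by auto
    have "\<bar>distr_fun (charge_bal \<nu>p \<nu>m) b - distr_fun (charge_bal \<nu>p \<nu>m) a\<bar> \<le> (b - a) / pi * C"
    proof (rule distr_fun_charge_bal_increment_le[OF charge \<open>a \<le> b\<close> _ _ g C \<open>0 \<le> C\<close>])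
      show "complex_of_real ` {a..b} \<inter> charge_supp \<nu>p \<nu>m = {}" using disj sub by blast
    qed (use major sub in auto)
    then show "dist (distr_fun (charge_bal \<nu>p \<nu>m) a) (distr_fun (charge_bal \<nu>p \<nu>m) b) \<le> C / pi * dist a b"
      using ab by (simp add: dist_real_def abs_minus_commute mult.commute)
  qed (simp add: \<open>0 \<le> C\<close>)
  then show ?thesis by blast
qed

section \<open>Charges of finite type\<close>

lemma dyadic_bracket:
  fixes \<rho> x :: real
  assumes "0 < \<rho>" "\<rho> \<le> x"
  obtains k :: nat where "\<rho> * 2 ^ k \<le> x" "x \<le> \<rho> * 2 ^ Suc k"
proof -
  obtain n where "x / \<rho> < 2 ^ n" using real_arch_pow[of 2 "x / \<rho>"] by auto
  then have "x < \<rho> * 2 ^ n" using assms by (simp add: field_simps)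
  then obtain k where "\<not> x < \<rho> * 2 ^ k" "x < \<rho> * 2 ^ Suc k"
    using ex_least_nat_less[of "\<lambda>k. x < \<rho> * 2 ^ k" n] assms by auto
  then show ?thesis by (meson less_imp_le not_less that)
qed

lemma dyadic_shell_powr:
  fixes \<rho> A p :: real
  assumes "0 < \<rho>"
  shows "1 / (\<rho> * 2 ^ k) * (A * (\<rho> * 2 ^ Suc k) powr p)
    = A * 2 powr p * \<rho> powr (p - 1) * (2 powr (p - 1)) ^ k"
proof -
  have "(2 powr (p - 1)) ^ k = 2 powr ((p - 1) * real k)"
    by (simp add: powr_realpow[symmetric] powr_powr)
  also have "\<dots> = 2 powr (p * real k - real k)" by (simp add: algebra_simps)
  also have "\<dots> = (2 powr real k) powr p / 2 powr real k"
    by (simp add: powr_powr powr_diff mult.commute)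
  finally have "(2 powr (p - 1)) ^ k = (2 powr real k) powr p / 2 powr real k" .
  moreover have "(\<rho> * 2 ^ Suc k) powr p = \<rho> powr p * 2 powr p * (2 powr real k) powr p"
    using assms by (simp add: powr_mult powr_realpow[symmetric] powr_add)
  ultimately show ?thesis
    using assms by (simp add: powr_diff powr_realpow field_simps)
qed

lemma indicator_inverse_norm_le_dyadic_sum:
  fixes z :: "'a::real_normed_vector"
  assumes "0 < \<rho>"
  shows "indicator (- ball 0 \<rho>) z * ennreal (1 / norm z)
    \<le> (\<Sum>k. ennreal (1 / (\<rho> * 2 ^ k)) * indicator (cball 0 (\<rho> * 2 ^ Suc k)) z)"
proof -
  define f where "f k = ennreal (1 / (\<rho> * 2 ^ k)) * indicator (cball 0 (\<rho> * 2 ^ Suc k)) z" for k :: nat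
  have "indicator (- ball 0 \<rho>) z * ennreal (1 / norm z) \<le> (\<Sum>k. f k)"
  proof (cases "\<rho> \<le> norm z")
    case True
    then obtain k where k: "\<rho> * 2 ^ k \<le> norm z" "norm z \<le> \<rho> * 2 ^ Suc k"
      using dyadic_bracket[OF assms] by blast
    then have "indicator (- ball 0 \<rho>) z * ennreal (1 / norm z) \<le> f k"
      using assms by (auto simp: indicator_def f_def intro!: ennreal_leI frac_le)
    also have "\<dots> \<le> (\<Sum>k. f k)"
      using sum_le_suminf[of f "{k}"] by (simp add: summableI)
    finally show ?thesis .
  qed simp
  then show ?thesis by (simp only: f_def)
qed

text \<open>Dyadic decomposition: on \<open>\<rho> 2\<^sup>k \<le> \<parallel>z\<parallel> \<le> \<rho> 2\<^sup>k\<^sup>+\<^sup>1\<close> the weight \<open>1 / \<parallel>z\<parallel>\<close> is at most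
  \<open>1 / (\<rho> 2\<^sup>k)\<close>, and the masses \<open>A (\<rho> 2\<^sup>k\<^sup>+\<^sup>1)\<^sup>p\<close> of these shells form a geometric series.\<close>

lemma nn_integral_inverse_norm_tail_le:
  fixes M :: "'a::real_normed_vector measure"
  assumes sM: "sets M = sets borel" and A: "0 \<le> A" and p: "p < 1" and \<rho>: "0 < \<rho>"
    and growth: "\<And>r. \<rho> \<le> r \<Longrightarrow> emeasure M (cball 0 r) \<le> ennreal (A * r powr p)"
  shows "(\<integral>\<^sup>+ z. indicator (- ball 0 \<rho>) z * ennreal (1 / norm z) \<partial>M)
    \<le> ennreal (A * 2 powr p * \<rho> powr (p - 1) / (1 - 2 powr (p - 1)))"
proof -
  define q where "q = 2 powr (p - 1)"
  have q: "0 < q" "q < 1" using p by (auto simp: q_def powr_less_one)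
  define f where "f k z = ennreal (1 / (\<rho> * 2 ^ k)) * indicator (cball 0 (\<rho> * 2 ^ Suc k)) z"
    for k :: nat and z :: 'a
  have [measurable]: "f k \<in> borel_measurable M" for k
    unfolding f_def measurable_cong_sets[OF sM refl] by measurable
  have "(\<integral>\<^sup>+ z. indicator (- ball 0 \<rho>) z * ennreal (1 / norm z) \<partial>M) \<le> (\<integral>\<^sup>+ z. (\<Sum>k. f k z) \<partial>M)"
    unfolding f_def by (intro nn_integral_mono indicator_inverse_norm_le_dyadic_sum \<rho>)
  also have "\<dots> = (\<Sum>k. integral\<^sup>N M (f k))" by (rule nn_integral_suminf) simp
  also have "\<dots> \<le> (\<Sum>k. ennreal (A * 2 powr p * \<rho> powr (p - 1) * q ^ k))"
  proof (intro suminf_le summableI)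
    fix k
    have "integral\<^sup>N M (f k) = ennreal (1 / (\<rho> * 2 ^ k)) * emeasure M (cball 0 (\<rho> * 2 ^ Suc k))"
      unfolding f_def by (rule nn_integral_cmult_indicator) (simp add: sM)
    also have "\<dots> \<le> ennreal (1 / (\<rho> * 2 ^ k)) * ennreal (A * (\<rho> * 2 ^ Suc k) powr p)"
      using one_le_power[of "2::real" k] \<rho> by (intro mult_left_mono growth) (auto simp del: power_Suc)
    also have "\<dots> = ennreal (1 / (\<rho> * 2 ^ k) * (A * (\<rho> * 2 ^ Suc k) powr p))"
      using \<rho> A by (intro ennreal_mult[symmetric]) auto
    also have "\<dots> = ennreal (A * 2 powr p * \<rho> powr (p - 1) * q ^ k)"
      unfolding q_def by (simp only: dyadic_shell_powr[OF \<rho>])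
    finally show "integral\<^sup>N M (f k) \<le> ennreal (A * 2 powr p * \<rho> powr (p - 1) * q ^ k)" .
  qed
  also have "\<dots> = ennreal (\<Sum>k. A * 2 powr p * \<rho> powr (p - 1) * q ^ k)"
    using q A by (intro suminf_ennreal2 summable_mult summable_geometric) auto
  also have "(\<Sum>k. A * 2 powr p * \<rho> powr (p - 1) * q ^ k) = A * 2 powr p * \<rho> powr (p - 1) / (1 - q)"
    using q by (simp add: suminf_mult suminf_geometric summable_geometric)
  finally show ?thesis by (simp add: q_def)
qed

lemma blaschke_tail_antimono:
  assumes "r \<le> s"
  shows "blaschke_tail M s \<le> blaschke_tail M r"
  unfolding blaschke_tail_def using assms by (intro nn_integral_mono) (auto simp: indicator_def)

lemma blaschke_tail_le_powr:
  assumes sM: "sets M = sets borel" and A: "0 \<le> A"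
    and growth: "\<And>r. r1 \<le> r \<Longrightarrow> emeasure M (cball 0 r) \<le> ennreal (A * r powr p)"
    and fin: "blaschke_tail M r0 < \<infinity>"
  obtains K s0 where "0 \<le> K" "\<And>s. s0 \<le> s \<Longrightarrow> blaschke_tail M s \<le> ennreal (K * s powr (p - 1))"
proof (cases "1 \<le> p")
  case True
  define K where "K = enn2real (blaschke_tail M r0)"
  have "blaschke_tail M s \<le> ennreal (K * s powr (p - 1))" if "max r0 1 \<le> s" for s
  proof -
    have "blaschke_tail M s \<le> ennreal K"
      using blaschke_tail_antimono[of r0 s M] fin that by (simp add: K_def ennreal_enn2real_if less_top)
    moreover have "K \<le> K * s powr (p - 1)"
      using mult_left_mono[OF ge_one_powr_ge_zero, of s "p - 1" K] True that by (simp add: K_def)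
    ultimately show ?thesis using order_trans ennreal_leI by blast
  qed
  then show ?thesis using that[of K "max r0 1"] by (simp add: K_def)
next
  case False
  define K where "K = A * 2 powr p / (1 - 2 powr (p - 1))"
  have "blaschke_tail M s \<le> ennreal (K * s powr (p - 1))" if s: "max r1 1 \<le> s" for s
  proof -
    have "blaschke_tail M s \<le> (\<integral>\<^sup>+ z. indicator (- ball 0 s) z * ennreal (1 / cmod z) \<partial>M)"
      unfolding blaschke_tail_def
      by (intro nn_integral_mono) (auto simp: indicator_def Im_inverse_cnj_le intro: ennreal_leI)
    also have "\<dots> \<le> ennreal (A * 2 powr p * s powr (p - 1) / (1 - 2 powr (p - 1)))"
      using False s by (intro nn_integral_inverse_norm_tail_le[OF sM A] growth) auto
    finally show ?thesis by (simp add: K_def)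
  qed
  moreover have "0 \<le> K"
    using False A by (auto simp: K_def powr_less_one intro!: divide_nonneg_pos)
  ultimately show ?thesis using that by blast
qed

lemma growth_bound_of_Limsup:
  fixes T :: "real \<Rightarrow> ennreal"
  assumes "Limsup at_top (\<lambda>r. enn2ereal (T r) / ereal (r powr p)) < \<infinity>"
  obtains A r1 where "0 \<le> A" "\<And>r. r1 \<le> r \<Longrightarrow> T r \<le> ennreal (A * r powr p)"
proof -
  obtain n :: nat where n: "Limsup at_top (\<lambda>r. enn2ereal (T r) / ereal (r powr p)) < ereal (real n)"
    using assms less_PInf_Ex_of_nat by auto
  then obtain N where N: "\<And>r. N \<le> r \<Longrightarrow> enn2ereal (T r) / ereal (r powr p) < ereal (real n)"
    using Limsup_lessD[OF n] by (auto simp: eventually_at_top_linorder)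
  have "T r \<le> ennreal (real n * r powr p)" if r: "max N 1 \<le> r" for r
  proof -
    have "0 < r powr p" using r by auto
    then have "enn2ereal (T r) < ereal (real n) * ereal (r powr p)"
      using N[of r] r ereal_divide_less_iff[of "ereal (r powr p)" "enn2ereal (T r)"] by simp
    then have "enn2ereal (T r) < enn2ereal (ennreal (real n * r powr p))"
      using \<open>0 < r powr p\<close> by simp
    then show ?thesis by (simp only: less_ennreal.rep_eq less_imp_le)
  qed
  then show ?thesis using that[of "real n" "max N 1"] by auto
qed

lemma cone_bound_of_Liminf:
  assumes "0 < Liminf (inf at_infinity (principal S)) (\<lambda>z. ereal (Im z / cmod z))"
  obtains c R0 where "0 < c" "0 < R0" "\<And>z. z \<in> S \<Longrightarrow> R0 \<le> cmod z \<Longrightarrow> c * cmod z \<le> Im z"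
proof -
  obtain c where c: "0 < ereal c" "ereal c < Liminf (inf at_infinity (principal S)) (\<lambda>z. ereal (Im z / cmod z))"
    using ereal_dense2[OF assms] by auto
  then obtain b where b: "\<And>z. b \<le> cmod z \<Longrightarrow> z \<in> S \<Longrightarrow> c < Im z / cmod z"
    using less_LiminfD[OF c(2)] by (auto simp: eventually_inf_principal eventually_at_infinity)
  have "c * cmod z \<le> Im z" if "z \<in> S" "max b 1 \<le> cmod z" for z
  proof -
    have "0 < cmod z" using that(2) by linarith
    with b[of z] that have "c * cmod z < Im z" by (simp add: less_divide_eq)
    then show ?thesis by simp
  qed
  then show ?thesis using that[of c "max b 1"] c by auto
qed

text \<open>With \<open>s = \<bar>x\<^sub>0\<bar>\<close>, the constants \<open>8 / s\<close> and \<open>2 / (c s)\<close> bound the Poisson kernel of the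
  segment on \<open>D(s/2)\<close>, which stays at distance \<open>s/4\<close> from it, and on the cone \<open>Im z \<ge> c \<bar>z\<bar>\<close>
  outside \<open>D(s/2)\<close>, where \<open>Im z \<ge> c s / 2\<close>.\<close>

definition cone_majorant :: "real \<Rightarrow> real \<Rightarrow> complex \<Rightarrow> real" where
  "cone_majorant c s = poisson_majorant (4 * s) (\<lambda>z. 8 / s * indicator (cball 0 (s / 2)) z + 2 / (c * s))"

lemma poisson_kernel_le_cone_majorant:
  assumes c: "0 < c" and s: "0 < s" and z: "0 < Im z" and t: "3 * s / 4 \<le> \<bar>t\<bar>" "\<bar>t\<bar> \<le> 5 * s / 4"
    and cone: "s / 2 < cmod z \<Longrightarrow> c * cmod z \<le> Im z"
  shows "poisson_kernel z t \<le> cone_majorant c s z"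
  unfolding cone_majorant_def
proof (rule poisson_kernel_le_majorant[OF z])
  have "0 < 2 / (c * s)" using c s by simp
  show "poisson_kernel z t \<le> 8 / s * indicator (cball 0 (s / 2)) z + 2 / (c * s)"
  proof (cases "cmod z \<le> s / 2")
    case True
    have "\<bar>t\<bar> - cmod z \<le> cmod (z - complex_of_real t)"
      using norm_triangle_ineq2[of "complex_of_real t" z] by (simp add: norm_minus_commute)
    then have "poisson_kernel z t \<le> (s / 2) / (s / 4)\<^sup>2"
      using True t s z abs_Im_le_cmod[of z] by (intro poisson_kernel_le_of_dist) auto
    also have "\<dots> = 8 / s" using s by (simp add: power2_eq_square)
    finally have "poisson_kernel z t \<le> 8 / s" .
    moreover have "indicator (cball 0 (s / 2)) z = (1::real)" using True by simp
    ultimately show ?thesis using \<open>0 < 2 / (c * s)\<close> by (metis add_increasing2 less_imp_le mult_1_right)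
  next
    case False
    have "c * (s / 2) \<le> c * cmod z" using False c by (intro mult_left_mono) auto
    then have "c * (s / 2) \<le> Im z" using cone False by linarith
    then have "1 / Im z \<le> 1 / (c * (s / 2))" using c s z by (intro divide_left_mono) auto
    then have "poisson_kernel z t \<le> 2 / (c * s)"
      using poisson_kernel_le_inverse_Im[OF z, of t] by simp
    then show ?thesis using False by simp
  qed
qed (use t in auto)

lemma borel_measurable_cone_majorant[measurable]: "cone_majorant c s \<in> borel_measurable borel"
  unfolding cone_majorant_def by measurable

lemma scaled_emeasure_cball_le_powr:
  assumes growth: "\<And>r. r1 \<le> r \<Longrightarrow> emeasure M (cball 0 r) \<le> ennreal (A * r powr p)"
    and "0 \<le> A" "0 \<le> a" "0 < b" "0 < s" "r1 \<le> b * s"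
  shows "ennreal (a / s) * emeasure M (cball 0 (b * s)) \<le> ennreal (a * A * b powr p * s powr (p - 1))"
proof -
  have "ennreal (a / s) * emeasure M (cball 0 (b * s)) \<le> ennreal (a / s) * ennreal (A * (b * s) powr p)"
    using assms by (intro mult_left_mono growth) auto
  also have "\<dots> = ennreal (a / s * (A * (b * s) powr p))"
    using assms by (intro ennreal_mult[symmetric]) auto
  also have "a / s * (A * (b * s) powr p) = a * A * b powr p * s powr (p - 1)"
    using assms by (simp add: powr_mult powr_diff)
  finally show ?thesis .
qed

lemma nn_integral_cone_majorant_near_le:
  assumes sM: "sets M = sets borel" and A: "0 \<le> A" and c: "0 < c"
    and growth: "\<And>r. r1 \<le> r \<Longrightarrow> emeasure M (cball 0 r) \<le> ennreal (A * r powr p)"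
    and s: "0 < s" "r1 \<le> s / 2"
  shows "(\<integral>\<^sup>+ z. indicator (cball 0 (4 * s)) z * ennreal (8 / s * indicator (cball 0 (s / 2)) z + 2 / (c * s)) \<partial>M)
    \<le> ennreal ((8 * A * (1 / 2) powr p + 2 / c * A * 4 powr p) * s powr (p - 1))"
proof -
  have "(\<integral>\<^sup>+ z. indicator (cball 0 (4 * s)) z * ennreal (8 / s * indicator (cball 0 (s / 2)) z + 2 / (c * s)) \<partial>M)
      = (\<integral>\<^sup>+ z. ennreal (8 / s) * indicator (cball 0 (1 / 2 * s)) z
          + ennreal (2 / c / s) * indicator (cball 0 (4 * s)) z \<partial>M)"
    using s c by (intro nn_integral_cong) (auto simp: indicator_def ennreal_plus[symmetric] simp del: ennreal_plus)
  also have "\<dots> = ennreal (8 / s) * emeasure M (cball 0 (1 / 2 * s)) + ennreal (2 / c / s) * emeasure M (cball 0 (4 * s))"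
    using sM by (simp add: nn_integral_add nn_integral_cmult_indicator)
  also have "\<dots> \<le> ennreal (8 * A * (1 / 2) powr p * s powr (p - 1)) + ennreal (2 / c * A * 4 powr p * s powr (p - 1))"
    using A c s by (intro add_mono scaled_emeasure_cball_le_powr[OF growth]) auto
  finally show ?thesis
    using A c by (simp add: ennreal_plus[symmetric] distrib_right del: ennreal_plus)
qed

lemma nn_integral_cone_majorant_le:
  assumes sM: "sets M = sets borel" and A: "0 \<le> A" and c: "0 < c"
    and growth: "\<And>r. r1 \<le> r \<Longrightarrow> emeasure M (cball 0 r) \<le> ennreal (A * r powr p)"
    and fin: "blaschke_tail M r0 < \<infinity>"
  obtains K s0 where "0 \<le> K" "\<And>s. s0 \<le> s
    \<Longrightarrow> (\<integral>\<^sup>+ z. indicator upper_half z * ennreal (cone_majorant c s z) \<partial>M) \<le> ennreal (K * s powr (p - 1))"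
proof -
  obtain K0 s0 where K0: "0 \<le> K0" "\<And>s. s0 \<le> s \<Longrightarrow> blaschke_tail M s \<le> ennreal (K0 * s powr (p - 1))"
    using blaschke_tail_le_powr[OF sM A growth fin] by blast
  define K where "K = 8 * A * (1 / 2) powr p + 2 / c * A * 4 powr p + 4 * K0 * 4 powr (p - 1)"
  have "(\<integral>\<^sup>+ z. indicator upper_half z * ennreal (cone_majorant c s z) \<partial>M) \<le> ennreal (K * s powr (p - 1))"
    if s: "max (2 * r1) (max s0 1) \<le> s" for s
  proof -
    have s_pos: "0 < s" and "r1 \<le> s / 2" "s0 \<le> 4 * s" using s by auto
    have far: "4 * blaschke_tail M (4 * s) \<le> ennreal (4 * K0 * 4 powr (p - 1) * s powr (p - 1))"
      using mult_left_mono[OF K0(2)[OF \<open>s0 \<le> 4 * s\<close>], of 4] s_pos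
      by (simp add: ennreal_mult' powr_mult mult.assoc)
    have "(\<integral>\<^sup>+ z. indicator upper_half z * ennreal (cone_majorant c s z) \<partial>M)
        \<le> (\<integral>\<^sup>+ z. indicator (cball 0 (4 * s)) z * ennreal (8 / s * indicator (cball 0 (s / 2)) z + 2 / (c * s)) \<partial>M)
          + 4 * blaschke_tail M (4 * s)"
      unfolding cone_majorant_def by (rule nn_integral_poisson_majorant_le[OF sM]) auto
    also have "\<dots> \<le> ennreal (K * s powr (p - 1))"
      using add_mono[OF nn_integral_cone_majorant_near_le[OF sM A c growth s_pos \<open>r1 \<le> s / 2\<close>] far] A c K0(1)
      by (simp add: K_def ennreal_plus[symmetric] distrib_right del: ennreal_plus)
    finally show ?thesis .
  qed
  moreover have "0 \<le> K" using A c K0(1) by (simp add: K_def)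
  ultimately show ?thesis using that by blast
qed

lemma abs_bounds_near_midpoint:
  fixes t1 t2 t :: real
  assumes "\<bar>t2 - t1\<bar> \<le> \<bar>(t1 + t2) / 2\<bar> / 2" "t \<in> {t1..t2}"
  shows "3 * \<bar>(t1 + t2) / 2\<bar> / 4 \<le> \<bar>t\<bar>" "\<bar>t\<bar> \<le> 5 * \<bar>(t1 + t2) / 2\<bar> / 4"
proof -
  have "\<bar>t - (t1 + t2) / 2\<bar> \<le> (t2 - t1) / 2"
    using assms(2) by (intro abs_leI) (auto simp: field_simps)
  moreover have "\<bar>\<bar>t\<bar> - \<bar>(t1 + t2) / 2\<bar>\<bar> \<le> \<bar>t - (t1 + t2) / 2\<bar>"
    by (rule abs_triangle_ineq3)
  ultimately show "3 * \<bar>(t1 + t2) / 2\<bar> / 4 \<le> \<bar>t\<bar>" "\<bar>t\<bar> \<le> 5 * \<bar>(t1 + t2) / 2\<bar> / 4"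
    using assms by (auto simp: abs_le_iff)
qed

lemma distr_fun_charge_bal_increment_le_cone:
  assumes charge: "is_charge \<nu>p \<nu>m" and c: "0 < c"
    and cone: "\<And>z. z \<in> charge_supp \<nu>p \<nu>m \<Longrightarrow> 0 \<le> Im z \<Longrightarrow> R0 \<le> cmod z \<Longrightarrow> c * cmod z \<le> Im z"
    and s: "s = \<bar>(t1 + t2) / 2\<bar>" "0 < s" "2 * R0 \<le> s"
    and t: "t1 \<le> t2" "\<bar>t2 - t1\<bar> \<le> s / 2"
    and C: "(\<integral>\<^sup>+ z. indicator upper_half z * ennreal (cone_majorant c s z) \<partial>\<nu>p)
            + (\<integral>\<^sup>+ z. indicator upper_half z * ennreal (cone_majorant c s z) \<partial>\<nu>m) \<le> ennreal C"
    and "0 \<le> C"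
  shows "\<bar>distr_fun (charge_bal \<nu>p \<nu>m) t2 - distr_fun (charge_bal \<nu>p \<nu>m) t1\<bar> \<le> (t2 - t1) / pi * C"
proof (rule distr_fun_charge_bal_increment_le[OF charge t(1) _ _ _ C \<open>0 \<le> C\<close>])
  have near_s: "3 * s / 4 \<le> \<bar>t\<bar>" "\<bar>t\<bar> \<le> 5 * s / 4" if "t \<in> {t1..t2}" for t
    using abs_bounds_near_midpoint[OF _ that] t(2) s(1) by simp_all
  show "complex_of_real ` {t1..t2} \<inter> charge_supp \<nu>p \<nu>m = {}"
  proof (rule ccontr)
    assume "complex_of_real ` {t1..t2} \<inter> charge_supp \<nu>p \<nu>m \<noteq> {}"
    then obtain t where "t \<in> {t1..t2}" "complex_of_real t \<in> charge_supp \<nu>p \<nu>m" by blast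
    moreover from near_s[OF this(1)] s have "R0 \<le> \<bar>t\<bar>" "0 < \<bar>t\<bar>" by linarith+
    ultimately show False using cone[of "complex_of_real t"] c by (auto simp: mult_le_0_iff)
  qed
  show "poisson_kernel z t \<le> cone_majorant c s z"
    if "z \<in> charge_supp \<nu>p \<nu>m" "0 < Im z" "t \<in> {t1..t2}" for z t
    using that s near_s[OF that(3)] cone[of z]
    by (intro poisson_kernel_le_cone_majorant c) auto
qed measurable

lemma distr_fun_charge_bal_increment_le_powr:
  assumes charge: "is_charge \<nu>p \<nu>m"
    and blaschke: "blaschke_tail \<nu>p r0 + blaschke_tail \<nu>m r0 < \<infinity>"
    and growth: "Limsup at_top (\<lambda>r. enn2ereal (totvar \<nu>p \<nu>m (cball 0 r)) / ereal (r powr p)) < \<infinity>"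
    and cone: "0 < Liminf (inf at_infinity (principal ({z. 0 \<le> Im z} \<inter> charge_supp \<nu>p \<nu>m)))
                 (\<lambda>z. ereal (Im z / cmod z))"
  defines "F \<equiv> distr_fun (charge_bal \<nu>p \<nu>m)"
  shows "\<exists>b>0. \<exists>r0>0. \<forall>t1 t2. t1 < t2 \<and> \<bar>(t1 + t2) / 2\<bar> \<ge> r0 \<and> \<bar>t2 - t1\<bar> \<le> \<bar>(t1 + t2) / 2\<bar> / 2
           \<longrightarrow> \<bar>F t2 - F t1\<bar> \<le> b * \<bar>t2 - t1\<bar> * \<bar>(t1 + t2) / 2\<bar> powr (p - 1)"
proof -
  obtain A r1 where A: "0 \<le> A" and "\<And>r. r1 \<le> r \<Longrightarrow> totvar \<nu>p \<nu>m (cball 0 r) \<le> ennreal (A * r powr p)"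
    using growth_bound_of_Limsup[OF growth] by blast
  then have growth_pm: "\<And>r. r1 \<le> r \<Longrightarrow> emeasure \<nu>p (cball 0 r) \<le> ennreal (A * r powr p)"
      "\<And>r. r1 \<le> r \<Longrightarrow> emeasure \<nu>m (cball 0 r) \<le> ennreal (A * r powr p)"
    using totvar_leD by blast+
  have fin: "blaschke_tail \<nu>p r0 < \<infinity>" "blaschke_tail \<nu>m r0 < \<infinity>" using blaschke by auto
  obtain c R0 where c: "0 < c" "0 < R0"
    and cone_supp: "\<And>z. z \<in> {z. 0 \<le> Im z} \<inter> charge_supp \<nu>p \<nu>m \<Longrightarrow> R0 \<le> cmod z \<Longrightarrow> c * cmod z \<le> Im z"
    using cone_bound_of_Liminf[OF cone] by blast
  let ?I = "\<lambda>\<mu> s. \<integral>\<^sup>+ z. indicator upper_half z * ennreal (cone_majorant c s z) \<partial>\<mu>"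
  obtain Kp sp where Kp: "0 \<le> Kp" "\<And>s. sp \<le> s \<Longrightarrow> ?I \<nu>p s \<le> ennreal (Kp * s powr (p - 1))"
    using nn_integral_cone_majorant_le[OF is_chargeD(1)[OF charge] A c(1) growth_pm(1) fin(1)] by blast
  obtain Km sm where Km: "0 \<le> Km" "\<And>s. sm \<le> s \<Longrightarrow> ?I \<nu>m s \<le> ennreal (Km * s powr (p - 1))"
    using nn_integral_cone_majorant_le[OF is_chargeD(2)[OF charge] A c(1) growth_pm(2) fin(2)] by blast
  define b where "b = (Kp + Km) / pi + 1"
  define r where "r = max (2 * R0) (max sp sm)"
  have "\<bar>F t2 - F t1\<bar> \<le> b * \<bar>t2 - t1\<bar> * \<bar>(t1 + t2) / 2\<bar> powr (p - 1)"
    if t: "t1 < t2" "r \<le> \<bar>(t1 + t2) / 2\<bar>" "\<bar>t2 - t1\<bar> \<le> \<bar>(t1 + t2) / 2\<bar> / 2" for t1 t2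
  proof -
    define s where "s = \<bar>(t1 + t2) / 2\<bar>"
    have s: "0 < s" "2 * R0 \<le> s" "sp \<le> s" "sm \<le> s" using t(2) c by (auto simp: s_def r_def)
    have "?I \<nu>p s + ?I \<nu>m s \<le> ennreal ((Kp + Km) * s powr (p - 1))"
      using add_mono[OF Kp(2) Km(2)] s Kp(1) Km(1)
      by (simp add: ennreal_plus[symmetric] distrib_right del: ennreal_plus)
    then have "\<bar>F t2 - F t1\<bar> \<le> (t2 - t1) / pi * ((Kp + Km) * s powr (p - 1))"
      unfolding F_def using t Kp(1) Km(1) s cone_supp
      by (intro distr_fun_charge_bal_increment_le_cone[OF charge c(1) _ s_def]) (auto simp: s_def)
    also have "\<dots> = (Kp + Km) / pi * \<bar>t2 - t1\<bar> * s powr (p - 1)"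
      using t(1) by simp
    also have "\<dots> \<le> b * \<bar>t2 - t1\<bar> * s powr (p - 1)"
      by (intro mult_right_mono) (auto simp: b_def)
    finally show ?thesis by (simp add: s_def)
  qed
  moreover have "0 < b" "0 < r" using Kp(1) Km(1) c(2) by (auto simp: b_def r_def add_nonneg_pos)
  ultimately show ?thesis by blast
qed

theorem corollary2:
  fixes \<nu>p \<nu>m :: "complex measure"
  assumes charge: "is_charge \<nu>p \<nu>m"
    and blaschke: "\<exists>r0>0. (\<integral>\<^sup>+ z. indicator (upper_half - ball 0 r0) z * ennreal (Im (1 / cnj z)) \<partial>\<nu>p)
                        + (\<integral>\<^sup>+ z. indicator (upper_half - ball 0 r0) z * ennreal (Im (1 / cnj z)) \<partial>\<nu>m) < \<infinity>"
  defines "F \<equiv> distr_fun (charge_bal \<nu>p \<nu>m)"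
  shows "(\<forall>x1 x2. x1 \<le> x2 \<and> 0 \<notin> {x1..x2} \<and> complex_of_real ` {x1..x2} \<inter> charge_supp \<nu>p \<nu>m = {}
            \<longrightarrow> (\<exists>L. L-lipschitz_on {x1..x2} F))
      \<and> (\<forall>p::real. p \<ge> 0
           \<and> Limsup at_top (\<lambda>r::real. enn2ereal (totvar \<nu>p \<nu>m (cball 0 r)) / ereal (r powr p)) < \<infinity>
           \<and> Liminf (inf at_infinity (principal ({z. Im z \<ge> 0} \<inter> charge_supp \<nu>p \<nu>m)))
                 (\<lambda>z. ereal (Im z / cmod z)) > 0
           \<longrightarrow> (\<exists>b>0. \<exists>r0>0. \<forall>t1 t2. t1 < t2 \<and> \<bar>(t1 + t2) / 2\<bar> \<ge> r0
                       \<and> \<bar>t2 - t1\<bar> \<le> \<bar>(t1 + t2) / 2\<bar> / 2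
                 \<longrightarrow> \<bar>F t2 - F t1\<bar> \<le> b * \<bar>t2 - t1\<bar> * \<bar>(t1 + t2) / 2\<bar> powr (p - 1)))"
proof -
  obtain r0 where "blaschke_tail \<nu>p r0 + blaschke_tail \<nu>m r0 < \<infinity>"
    using blaschke unfolding blaschke_tail_def by blast
  then show ?thesis
    unfolding F_def
    using lipschitz_on_distr_fun_charge_bal[OF charge] distr_fun_charge_bal_increment_le_powr[OF charge]
    by blast
qed

end
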